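(* For every integer $k\ge 2$, the smallest $k$-admissible number is $2^{\binom{k}{2}+\nu_2(k)}$.
   Context: $\nu_2(x)$ denotes the 2-adic valuation of a positive integer $x$. For an integer $k\ge 1$, an integer $n$ is called $k$-admissible if $n>k$ and $\binom{n}{k}$ is divisible by $2^{\binom{k}{2}}$. *)

theory Defs
  imports "HOL-Computational_Algebra.Primes"
begin

definition nu2 :: "nat \<Rightarrow> nat" where
  "nu2 x = multiplicity (2::nat) x"

definition k_admissible :: "nat \<Rightarrow> nat \<Rightarrow> bool" where
  "k_admissible k n \<longleftrightarrow> n > k \<and> 2 ^ (k choose 2) dvd (n choose k)"

end

theory Submission
  imports Defs
begin

text \<open>
  Minimality rests on the bound \<open>2 ^ (\<nu>\<^sub>2 (n choose k) + \<nu>\<^sub>2 k) \<le> n\<close> for \<open>1 \<le> k \<le> n\<close>,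
  proved by induction on \<open>n\<close>. Write \<open>n = 2a + r\<close>, \<open>k = 2c + s\<close>; Legendre's formula
  \<open>\<nu>\<^sub>2 (n!) = \<lfloor>n/2\<rfloor> + \<nu>\<^sub>2 (\<lfloor>n/2\<rfloor>!)\<close> gives \<open>\<nu>\<^sub>2 (n choose k) = \<nu>\<^sub>2 (a choose c)\<close> unless \<open>n\<close> is even
  and \<open>k\<close> odd, where it is \<open>1 + \<nu>\<^sub>2 (a choose a - c) + \<nu>\<^sub>2 (a - c)\<close>. In every case the exponent
  exceeds the one for a pair with top entry \<open>a\<close> by at most \<open>1\<close>, while \<open>n \<ge> 2a\<close>.
  Admissibility of \<open>N = 2 ^ (k choose 2 + \<nu>\<^sub>2 k)\<close> follows from the absorption identity
  \<open>k * (N choose k) = N * (N - 1 choose k - 1)\<close>, which gives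
  \<open>\<nu>\<^sub>2 (N choose k) \<ge> \<nu>\<^sub>2 N - \<nu>\<^sub>2 k = k choose 2\<close>.
\<close>

lemma nu2_mult: "x \<noteq> 0 \<Longrightarrow> y \<noteq> 0 \<Longrightarrow> nu2 (x * y) = nu2 x + nu2 y"
  unfolding nu2_def by (rule prime_elem_multiplicity_mult_distrib) auto

lemma nu2_power_two: "nu2 (2 ^ m) = m"
  unfolding nu2_def by (rule multiplicity_same_power) auto

lemma nu2_double: "x \<noteq> 0 \<Longrightarrow> nu2 (2 * x) = Suc (nu2 x)"
  using nu2_mult[of 2 x] nu2_power_two[of 1] by simp

lemma nu2_odd: "nu2 (Suc (2 * x)) = 0"
  unfolding nu2_def by (rule not_dvd_imp_multiplicity_0) presburger

lemma power_two_dvd_iff_le_nu2: "x \<noteq> 0 \<Longrightarrow> 2 ^ e dvd x \<longleftrightarrow> e \<le> nu2 x"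
  unfolding nu2_def by (rule power_dvd_iff_le_multiplicity) auto

lemma nu2_fact_Suc: "nu2 (fact (Suc n)) = nu2 (Suc n) + nu2 (fact n)"
  unfolding fact_Suc of_nat_id by (rule nu2_mult) auto

lemma nu2_fact_double: "nu2 (fact (2 * a)) = a + nu2 (fact a)"
proof (induction a)
  case 0
  then show ?case by simp
next
  case (Suc a)
  have "nu2 (fact (2 * Suc a)) = nu2 (2 * Suc a) + nu2 (Suc (2 * a)) + nu2 (fact (2 * a))"
    using nu2_fact_Suc[of "Suc (2 * a)"] nu2_fact_Suc[of "2 * a"] by simp
  also have "\<dots> = Suc a + nu2 (fact (Suc a))"
    using Suc.IH nu2_double[of "Suc a"] nu2_odd[of a] nu2_fact_Suc[of a] by simp
  finally show ?case .
qed

lemma nu2_fact_odd: "nu2 (fact (Suc (2 * a))) = a + nu2 (fact a)"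
  using nu2_fact_double[of a] nu2_fact_Suc[of "2 * a"] nu2_odd[of a] by simp

lemma nu2_fact_binomial:
  assumes "k \<le> n"
  shows "nu2 (fact n) = nu2 (n choose k) + nu2 (fact k) + nu2 (fact (n - k))"
proof -
  have "nu2 (fact n) = nu2 (fact k * fact (n - k) * (n choose k))"
    using binomial_fact_lemma[OF assms] by (metis of_nat_id)
  then show ?thesis
    using assms by (simp add: nu2_mult)
qed

lemma nu2_choose_even_even:
  assumes "c \<le> a"
  shows "nu2 (2 * a choose 2 * c) = nu2 (a choose c)"
proof -
  have "nu2 (fact (2 * a - 2 * c)) = (a - c) + nu2 (fact (a - c))"
    using nu2_fact_double[of "a - c"] by (simp add: right_diff_distrib')
  then show ?thesis
    using nu2_fact_binomial[of "2 * c" "2 * a"] nu2_fact_binomial[OF assms] assms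
      nu2_fact_double[of a] nu2_fact_double[of c]
    by linarith
qed

lemma nu2_choose_odd_even:
  assumes "c \<le> a"
  shows "nu2 (Suc (2 * a) choose 2 * c) = nu2 (a choose c)"
proof -
  have "Suc (2 * a) - 2 * c = Suc (2 * (a - c))"
    using assms by simp
  then have "nu2 (fact (Suc (2 * a) - 2 * c)) = (a - c) + nu2 (fact (a - c))"
    using nu2_fact_odd[of "a - c"] by simp
  then show ?thesis
    using nu2_fact_binomial[of "2 * c" "Suc (2 * a)"] nu2_fact_binomial[OF assms] assms
      nu2_fact_odd[of a] nu2_fact_double[of c]
    by linarith
qed

lemma nu2_choose_odd_odd:
  assumes "c \<le> a"
  shows "nu2 (Suc (2 * a) choose Suc (2 * c)) = nu2 (a choose c)"
proof -
  have "Suc (2 * a) - Suc (2 * c) = 2 * (a - c)"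
    using assms by simp
  then have "nu2 (fact (Suc (2 * a) - Suc (2 * c))) = (a - c) + nu2 (fact (a - c))"
    using nu2_fact_double[of "a - c"] by simp
  then show ?thesis
    using nu2_fact_binomial[of "Suc (2 * c)" "Suc (2 * a)"] nu2_fact_binomial[OF assms] assms
      nu2_fact_odd[of a] nu2_fact_odd[of c]
    by linarith
qed

lemma nu2_choose_even_odd:
  assumes "c < a"
  shows "nu2 (2 * a choose Suc (2 * c)) = Suc (nu2 (a choose c) + nu2 (a - c))"
proof -
  define d where "d = a - Suc c"
  have "2 * a - Suc (2 * c) = Suc (2 * d)" and ac: "a - c = Suc d"
    using assms unfolding d_def by auto
  then have "nu2 (fact (2 * a - Suc (2 * c))) = d + nu2 (fact d)"
    and "nu2 (fact (a - c)) = nu2 (a - c) + nu2 (fact d)"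
    using nu2_fact_odd[of d] nu2_fact_Suc[of d] by simp_all
  then show ?thesis
    using nu2_fact_binomial[of "Suc (2 * c)" "2 * a"] nu2_fact_binomial[of c a] assms ac
      nu2_fact_double[of a] nu2_fact_odd[of c]
    by linarith
qed

lemma power_two_nu2_choose_le:
  "1 \<le> k \<Longrightarrow> k \<le> n \<Longrightarrow> 2 ^ (nu2 (n choose k) + nu2 k) \<le> n"
proof (induction n arbitrary: k rule: less_induct)
  case (less n)
  define a where "a = n div 2"
  define c where "c = k div 2"
  have "c \<le> a"
    using less.prems unfolding a_def c_def by (simp add: div_le_mono)
  have "n = 2 * a \<or> n = Suc (2 * a)" "k = 2 * c \<or> k = Suc (2 * c)"
    unfolding a_def c_def by presburger+
  then consider (even_even) "n = 2 * a" "k = 2 * c" | (odd_even) "n = Suc (2 * a)" "k = 2 * c"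
    | (odd_odd) "n = Suc (2 * a)" "k = Suc (2 * c)" | (even_odd) "n = 2 * a" "k = Suc (2 * c)"
    by blast
  then show ?case
  proof cases
    case even_even
    then have "2 ^ (nu2 (a choose c) + nu2 c) \<le> a"
      using less \<open>c \<le> a\<close> by simp
    then show ?thesis
      using even_even less.prems \<open>c \<le> a\<close> nu2_choose_even_even[of c a] nu2_double[of c] by simp
  next
    case odd_even
    then have "2 ^ (nu2 (a choose c) + nu2 c) \<le> a"
      using less \<open>c \<le> a\<close> by simp
    then show ?thesis
      using odd_even less.prems \<open>c \<le> a\<close> nu2_choose_odd_even[of c a] nu2_double[of c] by simp
  next
    case odd_odd
    have "2 ^ nu2 (a choose c) \<le> n"
    proof (cases "c = 0")
      case True
      then show ?thesis
        using odd_odd by (simp add: nu2_def)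
    next
      case False
      then have "2 ^ (nu2 (a choose c) + nu2 c) \<le> a"
        using less.IH[of a c] odd_odd \<open>c \<le> a\<close> by simp
      moreover have "(2::nat) ^ nu2 (a choose c) \<le> 2 ^ (nu2 (a choose c) + nu2 c)"
        by (rule power_increasing) auto
      ultimately show ?thesis
        using odd_odd by linarith
    qed
    then show ?thesis
      using odd_odd \<open>c \<le> a\<close> nu2_choose_odd_odd[of c a] nu2_odd[of c] by simp
  next
    case even_odd
    then have "c < a"
      using less.prems by simp
    then have "a choose (a - c) = a choose c"
      using binomial_symmetric[of c a] by simp
    then have "2 ^ (nu2 (a choose c) + nu2 (a - c)) \<le> a"
      using less.IH[of a "a - c"] even_odd \<open>c < a\<close> by simp
    then show ?thesis
      using even_odd \<open>c < a\<close> nu2_choose_even_odd[of c a] nu2_odd[of c] by simp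
  qed
qed

lemma nu2_choose_power_two_ge:
  assumes "1 \<le> k" "k \<le> 2 ^ m"
  shows "m \<le> nu2 (2 ^ m choose k) + nu2 k"
proof -
  have "k * (2 ^ m choose k) = 2 ^ m * ((2 ^ m - 1) choose (k - 1))"
    using binomial_absorption[of "k - 1" "2 ^ m"] assms(1) by simp
  then have "nu2 k + nu2 (2 ^ m choose k) = m + nu2 ((2 ^ m - 1) choose (k - 1))"
    using assms nu2_mult[of k "2 ^ m choose k"] nu2_power_two[of m]
      nu2_mult[of "2 ^ m" "(2 ^ m - 1) choose (k - 1)"] by simp
  then show ?thesis
    by linarith
qed

lemma less_power_two_choose_two_nu2: "2 \<le> k \<Longrightarrow> k < 2 ^ ((k choose 2) + nu2 k)"
proof -
  assume k: "2 \<le> k"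
  have "k \<le> (k choose 2) + nu2 k"
  proof (cases "k = 2")
    case True
    then show ?thesis
      using nu2_power_two[of 1] by simp
  next
    case False
    then have "k * 2 \<le> k * (k - 1)"
      using k by simp
    then have "k \<le> k * (k - 1) div 2"
      by linarith
    then show ?thesis
      by (simp add: choose_two)
  qed
  then have "(2::nat) ^ k \<le> 2 ^ ((k choose 2) + nu2 k)"
    by (rule power_increasing) simp
  then show ?thesis
    using less_exp[of k] by linarith
qed

theorem mainTheorem2:
  fixes k :: nat
  assumes "k \<ge> 2"
  shows "k_admissible k (2 ^ ((k choose 2) + nu2 k)) \<and>
         (\<forall>n. k_admissible k n \<longrightarrow> 2 ^ ((k choose 2) + nu2 k) \<le> n)"
proof
  let ?m = "(k choose 2) + nu2 k"
  have k_less: "k < 2 ^ ?m"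
    using assms by (rule less_power_two_choose_two_nu2)
  then have "k choose 2 \<le> nu2 (2 ^ ?m choose k)"
    using nu2_choose_power_two_ge[of k ?m] assms by simp
  then show "k_admissible k (2 ^ ?m)"
    using k_less power_two_dvd_iff_le_nu2 unfolding k_admissible_def by simp
  show "\<forall>n. k_admissible k n \<longrightarrow> 2 ^ ?m \<le> n"
  proof (intro allI impI)
    fix n
    assume "k_admissible k n"
    then have "k < n" "k choose 2 \<le> nu2 (n choose k)"
      unfolding k_admissible_def using power_two_dvd_iff_le_nu2 by auto
    have "(2::nat) ^ ?m \<le> 2 ^ (nu2 (n choose k) + nu2 k)"
      using \<open>k choose 2 \<le> nu2 (n choose k)\<close> by (intro power_increasing) auto
    also have "\<dots> \<le> n"
      using power_two_nu2_choose_le[of k n] \<open>k < n\<close> assms by simp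
    finally show "2 ^ ?m \<le> n" .
  qed
qed

end
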